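(* Let $\mu$ be a probability measure on $\mathbb{R}^p$ supported on a compact set $S$ such that $\mathrm{diam}(\mathrm{conv}(S))>0$. Then for every positive integer $d$ and every $\mathbf{x}\in\mathbb{R}^p$, \[\Lambda_{\mu,d}(\mathbf{x})\le\left(\frac{\mathrm{diam}(\mathrm{conv}(S))}{\mathrm{dist}(\mathbf{x},\mathrm{conv}(S))+\mathrm{diam}(\mathrm{conv}(S))}\right)^2.\]
   Context: $\mathrm{conv}(S)$ is the convex hull of $S$ and $\mathrm{diam}$ the diameter. For a finite Borel measure $\nu$ with finite moments, the Christoffel function is $\Lambda_{\nu,d}(\xi)=\min\{\int P^2\,d\nu: P\in\mathbb{R}[X]_d,\ P(\xi)=1\}$, where $\mathbb{R}[X]_d$ is the space of real polynomials in $p$ variables of total degree at most $d$. *)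

theory Defs
  imports "HOL-Analysis.Analysis" "HOL-Probability.Probability"
begin

definition monomial_exps :: "nat \<Rightarrow> ('n::finite \<Rightarrow> nat) set" where
  "monomial_exps d = {\<alpha>. (\<Sum>i\<in>UNIV. \<alpha> i) \<le> d}"

definition polys_deg :: "nat \<Rightarrow> (real ^ 'n::finite \<Rightarrow> real) set" where
  "polys_deg d = {P. \<exists>c :: ('n \<Rightarrow> nat) \<Rightarrow> real.
      P = (\<lambda>x. \<Sum>\<alpha>\<in>monomial_exps d. c \<alpha> * (\<Prod>i\<in>UNIV. (x $ i) ^ (\<alpha> i)))}"

definition christoffel :: "(real ^ 'n::finite) measure \<Rightarrow> nat \<Rightarrow> real ^ 'n \<Rightarrow> real" where
  "christoffel M d \<xi> = Inf {(\<integral>x. (P x)\<^sup>2 \<partial>M) | P. P \<in> polys_deg d \<and> P \<xi> = 1}"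

end

theory Submission
  imports Defs
begin

text \<open>If x lies outside the convex hull C of the support, let y be the point of C closest
  to x, r = |x - y| its distance and D the diameter of C. The affine function
  P z = (\<langle>z - y, x - y\<rangle> + D r) / (r^2 + D r) takes the value 1 at x, while on C
  the projection inequality \<langle>z - y, x - y\<rangle> \<le> 0 and Cauchy-Schwarz give
  0 \<le> P \<le> D / (r + D). Since P is a polynomial of degree 1 \<le> d and \<mu> is
  concentrated on C, the Christoffel function at x is at most \<integral> P^2 d\<mu> \<le> (D / (r + D))^2.
  If x lies in C, the constant polynomial 1 gives the bound 1.\<close>

lemma finite_monomial_exps: "finite (monomial_exps d :: ('n::finite \<Rightarrow> nat) set)"
proof (rule finite_subset)
  show "monomial_exps d \<subseteq> (PiE UNIV (\<lambda>_. {..d}) :: ('n \<Rightarrow> nat) set)"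
  proof
    fix \<alpha> :: "'n \<Rightarrow> nat"
    assume "\<alpha> \<in> monomial_exps d"
    then have "\<alpha> i \<le> d" for i
      using member_le_sum[of i UNIV \<alpha>] by (simp add: monomial_exps_def)
    then show "\<alpha> \<in> PiE UNIV (\<lambda>_. {..d})" by (simp add: PiE_UNIV_domain)
  qed
qed (rule finite_PiE, auto)

lemma polys_deg_monomial:
  assumes "\<alpha> \<in> monomial_exps d"
  shows "(\<lambda>x. c * (\<Prod>i\<in>UNIV. (x $ i) ^ \<alpha> i)) \<in> (polys_deg d :: (real ^ 'n::finite \<Rightarrow> real) set)"
proof -
  have "(\<Sum>\<beta>\<in>monomial_exps d. (if \<beta> = \<alpha> then c else 0) * (\<Prod>i\<in>UNIV. (x $ i) ^ \<beta> i))
      = c * (\<Prod>i\<in>UNIV. (x $ i) ^ \<alpha> i)" for x :: "real ^ 'n"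
    using assms by (simp add: if_distrib[where f = "\<lambda>v. v * _"] sum.delta[OF finite_monomial_exps] cong: if_cong)
  then show ?thesis
    unfolding polys_deg_def by (intro CollectI exI[of _ "\<lambda>\<beta>. if \<beta> = \<alpha> then c else 0"]) simp
qed

lemma polys_deg_add:
  assumes "P \<in> polys_deg d" "Q \<in> polys_deg d"
  shows "(\<lambda>x. P x + Q x) \<in> polys_deg d"
proof -
  obtain c e where "P = (\<lambda>x. \<Sum>\<alpha>\<in>monomial_exps d. c \<alpha> * (\<Prod>i\<in>UNIV. (x $ i) ^ \<alpha> i))"
    and "Q = (\<lambda>x. \<Sum>\<alpha>\<in>monomial_exps d. e \<alpha> * (\<Prod>i\<in>UNIV. (x $ i) ^ \<alpha> i))"
    using assms by (auto simp: polys_deg_def)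
  then show ?thesis
    unfolding polys_deg_def
    by (intro CollectI exI[of _ "\<lambda>\<alpha>. c \<alpha> + e \<alpha>"]) (simp add: distrib_right sum.distrib)
qed

lemma polys_deg_sum:
  assumes "finite I" "\<And>j. j \<in> I \<Longrightarrow> P j \<in> polys_deg d"
  shows "(\<lambda>x. \<Sum>j\<in>I. P j x) \<in> polys_deg d"
  using assms
proof (induction I rule: finite_induct)
  case empty
  show ?case
    unfolding polys_deg_def by (intro CollectI exI[of _ "\<lambda>_. 0"]) simp
next
  case (insert j I)
  then show ?case by (simp add: polys_deg_add)
qed

lemma affine_in_polys_deg:
  fixes a :: "real ^ 'n::finite"
  assumes "d \<ge> 1"
  shows "(\<lambda>z. inner a z + b) \<in> polys_deg d"
proof -
  define e :: "'n \<Rightarrow> 'n \<Rightarrow> nat" where "e i = (\<lambda>j. if j = i then 1 else 0)" for i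
  have "e i \<in> monomial_exps d" for i
    using assms by (simp add: monomial_exps_def e_def)
  then have coords: "(\<lambda>z. a $ i * (\<Prod>j\<in>UNIV. (z $ j) ^ e i j)) \<in> polys_deg d" for i
    by (rule polys_deg_monomial)
  have const: "(\<lambda>z. b) \<in> polys_deg d"
    using polys_deg_monomial[of "\<lambda>_. 0" d b] by (simp add: monomial_exps_def)
  have "(\<Prod>j\<in>UNIV. (z $ j) ^ e i j) = z $ i" for z :: "real ^ 'n" and i
    unfolding e_def by (simp add: if_distrib prod.delta cong: if_cong)
  then have "(\<lambda>z. inner a z + b)
      = (\<lambda>z. (\<Sum>i\<in>UNIV. a $ i * (\<Prod>j\<in>UNIV. (z $ j) ^ e i j)) + b)"
    by (simp add: inner_vec_def)
  moreover have "(\<lambda>z. \<Sum>i\<in>UNIV. a $ i * (\<Prod>j\<in>UNIV. (z $ j) ^ e i j)) \<in> polys_deg d"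
    using coords by (intro polys_deg_sum) auto
  ultimately show ?thesis
    using polys_deg_add const by simp
qed

lemma christoffel_le_of_AE_bound:
  fixes M :: "(real ^ 'n::finite) measure"
  assumes "prob_space M" "P \<in> polys_deg d" "P \<xi> = 1"
    and "AE z in M. (P z)\<^sup>2 \<le> B" "B \<ge> 0"
  shows "christoffel M d \<xi> \<le> B"
proof -
  interpret prob_space M by fact
  have "christoffel M d \<xi> \<le> (\<integral>x. (P x)\<^sup>2 \<partial>M)"
    unfolding christoffel_def
    by (rule cInf_lower) (use assms(2,3) in \<open>auto intro: bdd_belowI[of _ 0]\<close>)
  also have "\<dots> \<le> B"
    \<comment> \<open>a non-integrable P^2 has Bochner integral 0, whence the hypothesis B \<ge> 0\<close>
  proof (cases "integrable M (\<lambda>x. (P x)\<^sup>2)")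
    case True
    then have "(\<integral>x. (P x)\<^sup>2 \<partial>M) \<le> (\<integral>x. B \<partial>M)"
      using assms(4) by (intro integral_mono_AE) auto
    then show ?thesis by (simp add: prob_space)
  qed (use assms(5) in \<open>simp add: not_integrable_integral_eq\<close>)
  finally show ?thesis .
qed

lemma affine_peak_outside_convex:
  fixes C :: "'a::{real_inner,heine_borel} set"
  assumes "compact C" "convex C" "C \<noteq> {}" "x \<notin> C"
  obtains a b where "inner a x + b = 1"
    and "\<And>z. z \<in> C \<Longrightarrow> 0 \<le> inner a z + b"
    and "\<And>z. z \<in> C \<Longrightarrow> inner a z + b \<le> diameter C / (infdist x C + diameter C)"
proof -
  have "closed C" "bounded C" using assms(1) by (auto intro: compact_imp_closed compact_imp_bounded)
  define y where "y = closest_point C x"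
  define u where "u = x - y"
  define r where "r = norm u"
  define D where "D = diameter C"
  have yC: "y \<in> C" unfolding y_def using \<open>closed C\<close> assms(3) by (rule closest_point_in_set)
  have r_eq: "infdist x C = r"
    using setdist_closest_point[OF \<open>closed C\<close> assms(3)]
    by (simp add: infdist_eq_setdist r_def u_def y_def dist_norm)
  have "r > 0" using yC assms(4) by (auto simp: r_def u_def)
  have "D \<ge> 0" unfolding D_def by (rule diameter_ge_0[OF \<open>bounded C\<close>])
  define K where "K = r * (r + D)"
  have "K > 0" unfolding K_def using \<open>r > 0\<close> \<open>D \<ge> 0\<close> by simp
  define a where "a = u /\<^sub>R K"
  define b where "b = (D * r - inner u y) / K"
  have P_eq: "inner a z + b = (inner u (z - y) + D * r) / K" for z
    using \<open>K > 0\<close> by (simp add: a_def b_def inner_diff_right field_simps)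
  show thesis
  proof
    have "inner u (x - y) = r * r" by (simp add: u_def r_def flip: dot_square_norm power2_eq_square)
    then show "inner a x + b = 1"
      using \<open>K > 0\<close> unfolding P_eq by (simp add: K_def algebra_simps)
  next
    fix z assume "z \<in> C"
    have "norm (z - y) \<le> D"
      using diameter_bounded_bound[OF \<open>bounded C\<close> \<open>z \<in> C\<close> yC] by (simp add: D_def dist_norm)
    then have "\<bar>inner u (z - y)\<bar> \<le> D * r"
      using Cauchy_Schwarz_ineq2[of u "z - y"] \<open>r > 0\<close>
      by (auto simp: r_def mult.commute intro: order_trans mult_right_mono)
    then show "0 \<le> inner a z + b"
      using \<open>K > 0\<close> by (simp add: P_eq)
    have "inner u (z - y) \<le> 0"
      using closest_point_dot[OF assms(2) \<open>closed C\<close> \<open>z \<in> C\<close>] by (simp add: u_def y_def)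
    then have "inner a z + b \<le> D * r / K"
      using \<open>K > 0\<close> by (simp add: P_eq divide_right_mono)
    also have "\<dots> = diameter C / (infdist x C + diameter C)"
      using \<open>r > 0\<close> by (simp add: K_def r_eq D_def)
    finally show "inner a z + b \<le> diameter C / (infdist x C + diameter C)" .
  qed
qed

theorem lemma6p8:
  fixes M :: "(real ^ 'n::finite) measure" and S :: "(real ^ 'n) set"
    and d :: nat and x :: "real ^ 'n"
  assumes "prob_space M"
    and "sets M = sets borel"
    and "compact S"
    and "emeasure M (UNIV - S) = 0"
    and "diameter (convex hull S) > 0"
    and "d \<ge> 1"
  shows "christoffel M d x \<le>
    (diameter (convex hull S) / (infdist x (convex hull S) + diameter (convex hull S)))\<^sup>2"
proof -
  define C where "C = convex hull S"
  have "compact C" "convex C" "C \<noteq> {}"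
    using assms(3,5) by (auto simp: C_def compact_convex_hull)
  have "UNIV - S \<in> sets M"
    using assms(2,3) by (simp add: compact_imp_closed)
  then have AE_C: "AE z in M. z \<in> C"
    using assms(4) hull_subset[of S convex] by (auto simp: C_def intro: AE_I[of _ _ "UNIV - S"])
  show ?thesis
  proof (cases "x \<in> C")
    case True
    have "(\<lambda>z. inner 0 z + 1) \<in> polys_deg d" by (rule affine_in_polys_deg[OF assms(6)])
    then have "christoffel M d x \<le> 1"
      by (intro christoffel_le_of_AE_bound[OF assms(1)]) auto
    then show ?thesis using True assms(5) by (simp add: C_def)
  next
    case False
    then obtain a b where "inner a x + b = 1"
      and "\<And>z. z \<in> C \<Longrightarrow> 0 \<le> inner a z + b \<and> inner a z + b \<le> diameter C / (infdist x C + diameter C)"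
      using affine_peak_outside_convex[OF \<open>compact C\<close> \<open>convex C\<close> \<open>C \<noteq> {}\<close>] by metis
    then show ?thesis
      using AE_C unfolding C_def
      by (intro christoffel_le_of_AE_bound[OF assms(1) affine_in_polys_deg[OF assms(6)]])
        (auto elim!: eventually_mono intro: power_mono)
  qed
qed

end
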